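(* Let $\delta>0$, $\gamma>0$ and let $\bar{\mathcal X}^{\delta,\gamma}(t)=\bar M(I_{\delta,\gamma}(t))$. Its Lévy measure $\Pi^{\bar{\mathcal X}}$ is given, for $A_1,\dots,A_q\subseteq\mathbb{N}_0$, by $$\Pi^{\bar{\mathcal X}}(A_1\times\cdots\times A_q)=\frac{\delta\sqrt{2\lambda+\gamma^2}}{2\sqrt\pi}\sum_{\bar n\succ\bar0}\ \sum_{\substack{\Omega(k_i,n_i)\\ i=1,\dots,q}}\Gamma\Big(\sum_{i=1}^q\sum_{j=1}^{k_i}n_{ij}-\frac12\Big)\prod_{i=1}^q\prod_{j=1}^{k_i}\Big(\frac{2\lambda_{ij}}{2\lambda+\gamma^2}\Big)^{n_{ij}}\frac{\mathbb{I}_{\{n_i\in A_i\}}}{n_{ij}!}.$$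
   Context: Fix $q\ge1$, integers $k_1,\dots,k_q\ge1$, $\lambda_{ij}>0$ ($1\le i\le q$, $1\le j\le k_i$), $\lambda=\sum_{i,j}\lambda_{ij}$. The MGCP $\bar M(t)=(M_1(t),\dots,M_q(t))$ is the $\mathbb{N}_0^q$-valued Lévy process with $\bar M(0)=\bar0$, independent components and $\Pr\{\bar M(t)=\bar n\}=\prod_{i=1}^q\sum_{\Omega(k_i,n_i)}\prod_{j=1}^{k_i}\frac{(\lambda_{ij}t)^{n_{ij}}}{n_{ij}!}e^{-\lambda_{ij}t}$. $\{I_{\delta,\gamma}(t)\}$ is an inverse Gaussian subordinator independent of $\bar M$, with $\mathbb{E}e^{-sI_{\delta,\gamma}(t)}=\exp(-\delta t(\sqrt{2s+\gamma^2}-\gamma))$ and Lévy measure $\delta e^{-\gamma^2s/2}\,\mathrm{d}s/\sqrt{2\pi s^3}$. $\Omega(k_i,n_i)=\{(n_{i1},\dots,n_{ik_i})\in\mathbb{N}_0^{k_i}:\sum_jjn_{ij}=n_i\}$; the inner sum runs over families $(n_{ij})$ with $(n_{i1},\dots,n_{ik_i})\in\Omega(k_i,n_i)$ for each $i$. $\bar n\succ\bar0$ means $\bar n\in\mathbb{N}_0^q\setminus\{\bar0\}$. *)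

theory Defs
  imports "HOL-Probability.Probability"
begin

text \<open>Vectors in N_0^q are functions nat => nat vanishing at indices i >= q.\<close>
definition vecs :: "nat \<Rightarrow> (nat \<Rightarrow> nat) set" where
  "vecs q = {n. \<forall>i\<ge>q. n i = 0}"

definition posvecs :: "nat \<Rightarrow> (nat \<Rightarrow> nat) set" where
  "posvecs q = vecs q - {(\<lambda>_. 0)}"

definition Omega :: "nat \<Rightarrow> nat \<Rightarrow> (nat \<Rightarrow> nat) set" where
  "Omega k m = {v. (\<forall>j. (j < 1 \<or> k < j) \<longrightarrow> v j = 0) \<and> (\<Sum>j=1..k. j * v j) = m}"

definition Omega_fam :: "nat \<Rightarrow> (nat \<Rightarrow> nat) \<Rightarrow> (nat \<Rightarrow> nat) \<Rightarrow> (nat \<Rightarrow> nat \<Rightarrow> nat) set" where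
  "Omega_fam q k n = {nn. (\<forall>i<q. nn i \<in> Omega (k i) (n i)) \<and> (\<forall>i\<ge>q. nn i = (\<lambda>_. 0))}"

definition lam_total :: "nat \<Rightarrow> (nat \<Rightarrow> nat) \<Rightarrow> (nat \<Rightarrow> nat \<Rightarrow> real) \<Rightarrow> real" where
  "lam_total q k lam = (\<Sum>i<q. \<Sum>j=1..k i. lam i j)"

text \<open>The MGCP marginal pmf Pr{M(t) = n}.\<close>
definition mgcp_pmf :: "nat \<Rightarrow> (nat \<Rightarrow> nat) \<Rightarrow> (nat \<Rightarrow> nat \<Rightarrow> real) \<Rightarrow> real \<Rightarrow> (nat \<Rightarrow> nat) \<Rightarrow> real" where
  "mgcp_pmf q k lam t n =
     (if n \<in> vecs q then
        (\<Prod>i<q. \<Sum>v\<in>Omega (k i) (n i).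
            \<Prod>j=1..k i. (lam i j * t) ^ (v j) / fact (v j) * exp (- lam i j * t))
      else 0)"

text \<open>Marginal pmf of the subordinated process X(t) = M(I(t)), with M and I independent,
  where mu t is the law of I(t): Pr{X(t) = n} = integral of Pr{M(s) = n} w.r.t. mu t (ds).\<close>
definition sub_pmf :: "nat \<Rightarrow> (nat \<Rightarrow> nat) \<Rightarrow> (nat \<Rightarrow> nat \<Rightarrow> real) \<Rightarrow> (real \<Rightarrow> real measure)
                        \<Rightarrow> real \<Rightarrow> (nat \<Rightarrow> nat) \<Rightarrow> real" where
  "sub_pmf q k lam \<mu> t n = (\<integral>s. mgcp_pmf q k lam s n \<partial>(\<mu> t))"

text \<open>Pi is the Levy measure of an N_0^q-valued Levy process with marginal pmfs P t.
  Pi is given as a function of rectangles A_1 x ... x A_q (A i for i < q); it must be a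
  (nonnegative, countably additive) measure on N_0^q minus 0 determined by its point masses,
  and satisfy the Levy-Khintchine formula (Laplace form; such processes have zero drift
  and no Gaussian part):
    E exp(-u.X(t)) = exp(-t * sum_{n succ 0} (1 - exp(-u.n)) Pi{n}).\<close>
definition is_levy_measure_Nq :: "nat \<Rightarrow> (real \<Rightarrow> (nat \<Rightarrow> nat) \<Rightarrow> real)
                                   \<Rightarrow> ((nat \<Rightarrow> nat set) \<Rightarrow> real) \<Rightarrow> bool" where
  "is_levy_measure_Nq q P Lm \<longleftrightarrow>
     (\<forall>A. ((\<lambda>n. Lm (\<lambda>i. {n i})) has_sum Lm A) {n \<in> posvecs q. \<forall>i<q. n i \<in> A i})
   \<and> (\<forall>n\<in>posvecs q. Lm (\<lambda>i. {n i}) \<ge> 0)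
   \<and> (\<forall>t\<ge>0. \<forall>u::nat \<Rightarrow> real. (\<forall>i<q. 0 \<le> u i) \<longrightarrow>
        (\<exists>S. ((\<lambda>n. (1 - exp (- (\<Sum>i<q. u i * real (n i)))) * Lm (\<lambda>i. {n i})) has_sum S) (posvecs q)
           \<and> ((\<lambda>n. P t n * exp (- (\<Sum>i<q. u i * real (n i)))) has_sum exp (- t * S)) (vecs q)))"

definition levyX :: "nat \<Rightarrow> (nat \<Rightarrow> nat) \<Rightarrow> (nat \<Rightarrow> nat \<Rightarrow> real) \<Rightarrow> real \<Rightarrow> real
                      \<Rightarrow> (nat \<Rightarrow> nat set) \<Rightarrow> real" where
  "levyX q k lam \<delta> \<gamma> A =
     \<delta> * sqrt (2 * lam_total q k lam + \<gamma>\<^sup>2) / (2 * sqrt pi) *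
     (\<Sum>\<^sub>\<infinity>n\<in>posvecs q. \<Sum>nn\<in>Omega_fam q k n.
        Gamma (real (\<Sum>i<q. \<Sum>j=1..k i. nn i j) - 1/2) *
        (\<Prod>i<q. \<Prod>j=1..k i.
           (2 * lam i j / (2 * lam_total q k lam + \<gamma>\<^sup>2)) ^ (nn i j) *
           of_bool (n i \<in> A i) / fact (nn i j)))"

end

(*
  By independence, E exp(-u.X(t)) is the mu_t-average of E exp(-u.M(s)) = exp(-s psi(u)), where
  psi(u) = sum_ij lam_ij (1 - exp(-u_i j)) comes from the Poisson generating functions of the
  counts n_ij; the Laplace transform of I(t) turns this into exp(-t delta (sqrt(2 psi(u) + gamma^2) - gamma)).

  For the Levy measure, the binomial series of sqrt(1 - r) gives
    sum_{N >= 1} Gamma(N - 1/2) r^N / N! = 2 sqrt(pi) (1 - sqrt(1 - r)).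
  Take r = sum_ij x_ij exp(-u_i j) with x_ij = 2 lam_ij / D, D = 2 lambda + gamma^2: expanding
  r^N / N! by the multinomial theorem over the families (n_ij) and grouping these by
  n_i = sum_j j n_ij turns the left side into a multiple of sum_n exp(-u.n) Pi{n}.
  As 1 - r = (2 psi(u) + gamma^2) / D, this gives
    sum_n exp(-u.n) Pi{n} = delta (sqrt D - sqrt(2 psi(u) + gamma^2)),
  and subtracting the case u = 0 yields the Levy-Khintchine exponent delta (sqrt(2 psi(u) + gamma^2) - gamma).
*)
theory Submission
  imports Defs
begin

section \<open>Summation of nonnegative families\<close>

lemma has_sum_iff_nn_integral_count_space:
  fixes f :: "'a \<Rightarrow> real"
  assumes f_nonneg: "\<And>x. x \<in> A \<Longrightarrow> 0 \<le> f x" and "0 \<le> S"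
  shows "(f has_sum S) A \<longleftrightarrow> (\<integral>\<^sup>+x. ennreal (f x) \<partial>count_space A) = ennreal S"
proof -
  have summable_iff: "f summable_on A \<longleftrightarrow> Infinite_Set_Sum.abs_summable_on f A"
    using summable_on_iff_abs_summable_on_real[of f A] abs_summable_equivalent[of f A] by blast
  have nn_integral: "(\<integral>\<^sup>+x. ennreal (f x) \<partial>count_space A) = ennreal (infsum f A)"
    if "Infinite_Set_Sum.abs_summable_on f A"
    using nn_integral_conv_infsetsum[OF that] infsetsum_infsum[OF that] f_nonneg by simp
  show ?thesis
  proof
    assume has_sum: "(f has_sum S) A"
    then have "Infinite_Set_Sum.abs_summable_on f A"
      using summable_iff by (simp add: has_sum_imp_summable)
    with has_sum show "(\<integral>\<^sup>+x. ennreal (f x) \<partial>count_space A) = ennreal S"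
      by (simp add: nn_integral infsumI)
  next
    assume S: "(\<integral>\<^sup>+x. ennreal (f x) \<partial>count_space A) = ennreal S"
    have "integrable (count_space A) f"
      by (rule integrableI_nonneg) (use S f_nonneg in \<open>auto simp: AE_count_space\<close>)
    then have abs: "Infinite_Set_Sum.abs_summable_on f A"
      by (simp add: abs_summable_on_def)
    have "ennreal (infsum f A) = ennreal S"
      using nn_integral[OF abs] S by simp
    then have "infsum f A = S"
      using \<open>0 \<le> S\<close> f_nonneg by (simp add: infsum_nonneg)
    then show "(f has_sum S) A"
      using abs summable_iff has_sum_infsum by blast
  qed
qed

lemma has_sum_integral_nonneg:
  fixes f :: "'a \<Rightarrow> 'b \<Rightarrow> real"
  assumes "countable X"
    and f_meas: "\<And>n. n \<in> X \<Longrightarrow> f n \<in> borel_measurable M"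
    and G_meas: "G \<in> borel_measurable M" and G_int: "integrable M G"
    and AE_has_sum: "AE s in M. (\<forall>n\<in>X. 0 \<le> f n s) \<and> ((\<lambda>n. f n s) has_sum G s) X"
  shows "((\<lambda>n. \<integral>s. f n s \<partial>M) has_sum (\<integral>s. G s \<partial>M)) X"
proof -
  have G_nonneg: "AE s in M. 0 \<le> G s"
    using AE_has_sum by eventually_elim (auto intro: has_sum_nonneg)
  have f_nonneg: "AE s in M. 0 \<le> f n s" if "n \<in> X" for n
    using AE_has_sum by eventually_elim (use that in auto)
  have f_le_G: "AE s in M. f n s \<le> G s" if "n \<in> X" for n
    using AE_has_sum
  proof eventually_elim
    case (elim s)
    have "((\<lambda>m. f m s) has_sum f n s) {n}"
      using has_sum_finite[of "{n}" "\<lambda>m. f m s"] by simp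
    then show ?case
      by (rule has_sum_mono_neutral) (use elim that in auto)
  qed
  have f_int: "integrable M (f n)" if "n \<in> X" for n
    by (rule Bochner_Integration.integrable_bound[OF G_int f_meas[OF that]])
       (use f_le_G[OF that] f_nonneg[OF that] in \<open>eventually_elim, auto\<close>)
  have "(\<integral>\<^sup>+n. ennreal (\<integral>s. f n s \<partial>M) \<partial>count_space X)
      = (\<integral>\<^sup>+n. (\<integral>\<^sup>+s. ennreal (f n s) \<partial>M) \<partial>count_space X)"
    by (intro nn_integral_cong) (simp add: nn_integral_eq_integral[OF f_int f_nonneg])
  also have "\<dots> = (\<integral>\<^sup>+s. (\<integral>\<^sup>+n. ennreal (f n s) \<partial>count_space X) \<partial>M)"
    by (rule nn_integral_count_space_nn_integral[symmetric]) (use assms(1) f_meas in auto)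
  also have "\<dots> = (\<integral>\<^sup>+s. ennreal (G s) \<partial>M)"
    using AE_has_sum
  proof (intro nn_integral_cong_AE, eventually_elim)
    case (elim s)
    then have "0 \<le> G s"
      by (auto intro: has_sum_nonneg)
    with elim show ?case
      using has_sum_iff_nn_integral_count_space[of X "\<lambda>n. f n s" "G s"] by auto
  qed
  also have "\<dots> = ennreal (\<integral>s. G s \<partial>M)"
    by (rule nn_integral_eq_integral[OF G_int G_nonneg])
  finally show ?thesis
    by (subst has_sum_iff_nn_integral_count_space)
       (auto intro!: integral_nonneg_AE G_nonneg f_nonneg)
qed

lemma has_sum_Sigma_nonneg:
  fixes f :: "'a \<times> 'b \<Rightarrow> real"
  assumes "\<And>x. x \<in> A \<Longrightarrow> ((\<lambda>y. f (x, y)) has_sum g x) (B x)" "(g has_sum S) A"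
    and "\<And>x y. x \<in> A \<Longrightarrow> y \<in> B x \<Longrightarrow> 0 \<le> f (x, y)"
  shows "(f has_sum S) (Sigma A B)"
  using assms by (metis has_sum_SigmaI summable_on_SigmaI has_sum_imp_summable)

lemma has_sum_fibres_iff:
  fixes g :: "'a \<Rightarrow> real"
  assumes "h ` X \<subseteq> A" "\<And>a. a \<in> A \<Longrightarrow> finite {x \<in> X. h x = a}" "\<And>x. x \<in> X \<Longrightarrow> 0 \<le> g x"
  shows "((\<lambda>a. \<Sum>x\<in>{x \<in> X. h x = a}. g x) has_sum S) A \<longleftrightarrow> (g has_sum S) X"
proof -
  let ?F = "Sigma A (\<lambda>a. {x \<in> X. h x = a})"
  have "bij_betw snd ?F X"
    using assms(1) by (auto simp: bij_betw_def inj_on_def image_iff)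
  then have "(g has_sum S) X \<longleftrightarrow> ((\<lambda>p. g (snd p)) has_sum S) ?F"
    by (simp add: has_sum_reindex_bij_betw)
  also have "\<dots> \<longleftrightarrow> ((\<lambda>a. \<Sum>x\<in>{x \<in> X. h x = a}. g x) has_sum S) A"
  proof
    show "((\<lambda>p. g (snd p)) has_sum S) ?F \<Longrightarrow> ((\<lambda>a. \<Sum>x\<in>{x \<in> X. h x = a}. g x) has_sum S) A"
      by (rule has_sum_SigmaD) (use assms(2) in auto)
    show "((\<lambda>a. \<Sum>x\<in>{x \<in> X. h x = a}. g x) has_sum S) A \<Longrightarrow> ((\<lambda>p. g (snd p)) has_sum S) ?F"
      by (rule has_sum_Sigma_nonneg) (use assms(2,3) in auto)
  qed
  finally show ?thesis ..
qed

section \<open>Functions vanishing outside a finite set\<close>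

definition vanishing_outside :: "'a set \<Rightarrow> ('a \<Rightarrow> 'b::zero) set" where
  "vanishing_outside I = {f. \<forall>x. x \<notin> I \<longrightarrow> f x = 0}"

lemma finite_vanishing_outside_bounded:
  assumes "finite I"
  shows "finite {f \<in> vanishing_outside I. \<forall>x. f x \<le> (m::nat)}"
proof (rule finite_subset)
  show "finite {f. \<forall>x. (x \<in> I \<longrightarrow> f x \<in> {..m}) \<and> (x \<notin> I \<longrightarrow> f x = 0)}"
    using assms by (intro finite_set_of_finite_funs) auto
qed (auto simp: vanishing_outside_def)

lemma countable_vanishing_outside:
  assumes "finite I"
  shows "countable (vanishing_outside I :: ('a \<Rightarrow> 'b::{zero,countable}) set)"
proof (rule countable_image_inj_on)
  show "countable ((\<lambda>f. restrict f I) ` (vanishing_outside I :: ('a \<Rightarrow> 'b) set))"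
    by (rule countable_subset[of _ "PiE I (\<lambda>_. UNIV)"]) (auto intro: countable_PiE assms)
  show "inj_on (\<lambda>f. restrict f I) (vanishing_outside I :: ('a \<Rightarrow> 'b) set)"
    by (auto simp: inj_on_def vanishing_outside_def fun_eq_iff restrict_def) metis
qed

lemma bij_betw_vanishing_outside_insert:
  assumes "a \<notin> I"
  shows "bij_betw (\<lambda>(g, y). g(a := y)) (vanishing_outside I \<times> UNIV) (vanishing_outside (insert a I))"
proof (rule bij_betw_byWitness[where f'="\<lambda>f. (f(a := 0), f a)"])
  show "\<forall>p \<in> vanishing_outside I \<times> UNIV. (\<lambda>f. (f(a := 0), f a)) ((\<lambda>(g, y). g(a := y)) p) = p"
    using assms by (auto simp: vanishing_outside_def)
qed (use assms in \<open>auto simp: vanishing_outside_def\<close>)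

lemma has_sum_prod_vanishing_outside:
  fixes f :: "'a \<Rightarrow> 'b::zero \<Rightarrow> real"
  assumes "finite I" "\<And>x. x \<in> I \<Longrightarrow> (f x has_sum s x) UNIV" "\<And>x y. x \<in> I \<Longrightarrow> 0 \<le> f x y"
  shows "((\<lambda>g. \<Prod>x\<in>I. f x (g x)) has_sum (\<Prod>x\<in>I. s x)) (vanishing_outside I)"
  using assms
proof (induction I rule: finite_induct)
  case empty
  have "vanishing_outside {} = {(\<lambda>_. 0) :: 'a \<Rightarrow> 'b}"
    by (auto simp: vanishing_outside_def)
  then show ?case
    using has_sum_finite[of "{\<lambda>_. 0}" "\<lambda>_. 1::real"] by simp
next
  case (insert a I)
  define H where "H = (\<lambda>(g, y). f a y * (\<Prod>x\<in>I. f x (g x)))"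
  have inner: "((\<lambda>y. H (g, y)) has_sum s a * (\<Prod>x\<in>I. f x (g x))) UNIV" for g
    unfolding H_def using has_sum_cmult_left[OF insert.prems(1)[of a]] by simp
  have outer: "((\<lambda>g. s a * (\<Prod>x\<in>I. f x (g x))) has_sum s a * (\<Prod>x\<in>I. s x)) (vanishing_outside I)"
    using insert by (intro has_sum_cmult_right) auto
  have "(H has_sum s a * (\<Prod>x\<in>I. s x)) (vanishing_outside I \<times> UNIV)"
    by (rule has_sum_Sigma_nonneg[OF inner outer])
       (use insert.prems(2) in \<open>auto simp: H_def intro!: mult_nonneg_nonneg prod_nonneg\<close>)
  moreover have "H = (\<lambda>p. \<Prod>x\<in>insert a I. f x (((\<lambda>(g, y). g(a := y)) p) x))"
  proof
    fix p
    have "(\<Prod>x\<in>I. f x ((g(a := y)) x)) = (\<Prod>x\<in>I. f x (g x))" for g y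
      using insert.hyps by (intro prod.cong) auto
    then show "H p = (\<Prod>x\<in>insert a I. f x (((\<lambda>(g, y). g(a := y)) p) x))"
      using insert.hyps by (simp add: H_def split: prod.split)
  qed
  ultimately have "((\<lambda>p. \<Prod>x\<in>insert a I. f x (((\<lambda>(g, y). g(a := y)) p) x))
      has_sum (\<Prod>x\<in>insert a I. s x)) (vanishing_outside I \<times> UNIV)"
    using insert.hyps by simp
  then show ?case
    by (rule has_sum_reindex_bij_betw[OF bij_betw_vanishing_outside_insert[OF insert.hyps(2)],
          where f="\<lambda>g. \<Prod>x\<in>insert a I. f x (g x)", THEN iffD1])
qed

lemma finite_vanishing_outside_sum_eq:
  assumes "finite I"
  shows "finite {f \<in> vanishing_outside I. sum f I = (N::nat)}"
proof (rule finite_subset[OF _ finite_vanishing_outside_bounded[OF assms, of N]])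
  have "f x \<le> sum f I" if "f \<in> vanishing_outside I" for f :: "'a \<Rightarrow> nat" and x
    using that assms by (cases "x \<in> I") (auto simp: vanishing_outside_def intro: member_le_sum)
  then show "{f \<in> vanishing_outside I. sum f I = N} \<subseteq> {f \<in> vanishing_outside I. \<forall>x. f x \<le> N}"
    by auto
qed

lemma sum_vanishing_outside_insert:
  fixes g :: "('a \<Rightarrow> nat) \<Rightarrow> 'c::comm_monoid_add"
  assumes "finite P" "a \<notin> P"
  shows "(\<Sum>f\<in>{f \<in> vanishing_outside (insert a P). sum f (insert a P) = N}. g f)
           = (\<Sum>(m, h)\<in>Sigma {..N} (\<lambda>m. {h \<in> vanishing_outside P. sum h P = N - m}). g (h(a := m)))"
proof (rule sum.reindex_bij_witness[where i="\<lambda>(m, h). h(a := m)" and j="\<lambda>f. (f a, f(a := 0))"])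
  fix f assume f: "f \<in> {f \<in> vanishing_outside (insert a P). sum f (insert a P) = N}"
  have "sum (f(a := 0)) P = sum f P"
    using assms by (intro sum.cong) auto
  with f assms show "(f a, f(a := 0)) \<in> Sigma {..N} (\<lambda>m. {h \<in> vanishing_outside P. sum h P = N - m})"
    by (auto simp: vanishing_outside_def)
next
  fix mh assume "mh \<in> Sigma {..N} (\<lambda>m. {h \<in> vanishing_outside P. sum h P = N - m})"
  then obtain m h where mh: "mh = (m, h)" "m \<le> N" and h: "h \<in> vanishing_outside P" "sum h P = N - m"
    by auto
  have "h a = 0"
    using h assms by (auto simp: vanishing_outside_def)
  moreover have "sum (h(a := m)) P = sum h P"
    using assms by (intro sum.cong) auto
  ultimately show "(\<lambda>f. (f a, f(a := 0))) ((\<lambda>(m, h). h(a := m)) mh) = mh"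
    and "(\<lambda>(m, h). h(a := m)) mh \<in> {f \<in> vanishing_outside (insert a P). sum f (insert a P) = N}"
    using mh h assms by (auto simp: vanishing_outside_def)
qed auto

lemma sum_multinomial_fact:
  fixes z :: "'a \<Rightarrow> 'b::field_char_0"
  assumes "finite P"
  shows "(\<Sum>f\<in>{f \<in> vanishing_outside P. sum f P = N}. \<Prod>p\<in>P. z p ^ f p / fact (f p))
           = sum z P ^ N / fact N"
  using assms
proof (induction P arbitrary: N rule: finite_induct)
  case empty
  have "vanishing_outside {} = {(\<lambda>_. 0) :: 'a \<Rightarrow> nat}"
    by (auto simp: vanishing_outside_def)
  then show ?case
    by (cases N) auto
next
  case (insert a P)
  define D where "D M = {h \<in> vanishing_outside P. sum h P = M}" for M :: nat
  define T where "T h = (\<Prod>p\<in>P. z p ^ h p / fact (h p))" for h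
  have "(\<Prod>p\<in>P. z p ^ (h(a := m)) p / fact ((h(a := m)) p)) = T h" for h m
    unfolding T_def using insert.hyps by (intro prod.cong) auto
  then have "(\<Sum>f\<in>{f \<in> vanishing_outside (insert a P). sum f (insert a P) = N}. \<Prod>p\<in>insert a P. z p ^ f p / fact (f p))
      = (\<Sum>(m, h)\<in>Sigma {..N} (\<lambda>m. D (N - m)). z a ^ m / fact m * T h)"
    unfolding sum_vanishing_outside_insert[OF insert.hyps] D_def using insert.hyps by simp
  also have "\<dots> = (\<Sum>m\<le>N. z a ^ m / fact m * (\<Sum>h\<in>D (N - m). T h))"
    by (subst sum.Sigma[symmetric])
       (auto simp: D_def finite_vanishing_outside_sum_eq insert.hyps sum_distrib_left)
  also have "\<dots> = (\<Sum>m\<le>N. z a ^ m / fact m * (sum z P ^ (N - m) / fact (N - m)))"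
    using insert.IH by (simp add: D_def T_def)
  also have "\<dots> = (\<Sum>m\<le>N. of_nat (N choose m) * z a ^ m * sum z P ^ (N - m)) / fact N"
    by (simp add: sum_divide_distrib binomial_fact field_simps)
  also have "\<dots> = sum z (insert a P) ^ N / fact N"
    using insert.hyps by (simp add: binomial_ring)
  finally show ?case .
qed

section \<open>The Gamma-multinomial series\<close>

lemma Gamma_minus_one_half: "Gamma (- (1/2) :: real) = - 2 * sqrt pi"
proof -
  have "(- (1/2) :: real) \<notin> \<int>\<^sub>\<le>\<^sub>0"
    using fraction_not_in_Ints[of 2 "-1", where 'a=real] nonpos_Ints_subset_Ints by auto
  then have "Gamma (- (1/2) + 1) = - (1/2) * Gamma (- (1/2) :: real)"
    by (rule Gamma_plus1)
  then show ?thesis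
    using Gamma_one_half_real by simp
qed

lemma Gamma_nat_minus_one_half:
  "Gamma (real N - 1/2) = - 2 * sqrt pi * fact N * ((1/2 :: real) gchoose N) * (- 1) ^ N"
proof -
  define a where "a = real N - 1/2"
  have "rGamma (- (1/2) :: real) = pochhammer (- (1/2)) N * rGamma a"
    using pochhammer_rGamma[of "- (1/2) :: real" N] by (simp add: a_def)
  then have inv: "inverse (- 2 * sqrt pi) = pochhammer (- (1/2)) N * inverse (Gamma a)"
    by (simp add: rGamma_inverse_Gamma Gamma_minus_one_half)
  then have "Gamma a \<noteq> 0"
    by auto
  with inv have "Gamma a = - 2 * sqrt pi * pochhammer (- (1/2)) N"
    by (simp add: field_simps)
  moreover have "(- 1 :: real) ^ N * (- 1) ^ N = 1"
    by (simp flip: power_add)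
  ultimately show ?thesis
    unfolding a_def by (simp add: gbinomial_pochhammer mult_ac)
qed

lemma has_sum_Gamma_series:
  fixes r :: real
  assumes "0 \<le> r" "r < 1"
  shows "((\<lambda>N. Gamma (real N - 1/2) * r ^ N / fact N) has_sum 2 * sqrt pi * (1 - sqrt (1 - r))) {1..}"
proof -
  have "(\<lambda>N. ((1/2 :: real) gchoose N) * (- r) ^ N) sums (1 + - r) powr (1/2)"
    by (rule gen_binomial_real) (use assms in auto)
  then have "(\<lambda>N. - 2 * sqrt pi * (((1/2 :: real) gchoose N) * (- r) ^ N)) sums (- 2 * sqrt pi * sqrt (1 - r))"
    using assms by (intro sums_mult) (simp add: powr_half_sqrt)
  also have "(\<lambda>N. - 2 * sqrt pi * (((1/2 :: real) gchoose N) * (- r) ^ N))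
      = (\<lambda>N. Gamma (real N - 1/2) * r ^ N / fact N)"
    by (rule ext, subst Gamma_nat_minus_one_half) (simp add: power_minus[of r] field_simps)
  finally have "(\<lambda>N. Gamma (real (Suc N) - 1/2) * r ^ Suc N / fact (Suc N))
      sums (2 * sqrt pi * (1 - sqrt (1 - r)))"
    by (subst sums_Suc_iff) (simp add: Gamma_minus_one_half algebra_simps)
  then have "((\<lambda>N. Gamma (real (Suc N) - 1/2) * r ^ Suc N / fact (Suc N))
      has_sum 2 * sqrt pi * (1 - sqrt (1 - r))) UNIV"
    by (rule sums_nonneg_imp_has_sum)
       (use assms in \<open>auto intro!: mult_nonneg_nonneg divide_nonneg_nonneg less_imp_le[OF Gamma_real_pos]\<close>)
  also have "?this \<longleftrightarrow> ?thesis"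
    by (rule has_sum_reindex_bij_witness[where i="\<lambda>n. n - 1" and j=Suc]) auto
  finally show ?thesis .
qed

definition gamma_multinomial :: "'a set \<Rightarrow> ('a \<Rightarrow> real) \<Rightarrow> ('a \<Rightarrow> nat) \<Rightarrow> real" where
  "gamma_multinomial P z f = Gamma (real (sum f P) - 1/2) * (\<Prod>p\<in>P. z p ^ f p / fact (f p))"

lemma gamma_multinomial_nonneg:
  assumes "1 \<le> sum f P" "\<And>p. p \<in> P \<Longrightarrow> 0 \<le> z p"
  shows "0 \<le> gamma_multinomial P z f"
proof -
  have "(1::real) \<le> real (sum f P)"
    using assms(1) by (metis of_nat_1 of_nat_le_iff)
  then have "0 < Gamma (real (sum f P) - 1/2)"
    by (intro Gamma_real_pos) linarith
  then show ?thesis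
    unfolding gamma_multinomial_def using assms(2) by (auto intro!: mult_nonneg_nonneg prod_nonneg)
qed

lemma has_sum_gamma_multinomial:
  assumes "finite P" and z_nonneg: "\<And>p. p \<in> P \<Longrightarrow> 0 \<le> z p" and "sum z P < 1"
  shows "(gamma_multinomial P z has_sum 2 * sqrt pi * (1 - sqrt (1 - sum z P)))
           {f \<in> vanishing_outside P. 1 \<le> sum f P}"
proof -
  let ?X = "{f \<in> vanishing_outside P. 1 \<le> sum f P} :: ('a \<Rightarrow> nat) set"
  have fibre: "{f \<in> ?X. sum f P = N} = {f \<in> vanishing_outside P. sum f P = N}" if "N \<in> {1..}" for N
    using that by auto
  have fibre_sum: "(\<Sum>f\<in>{f \<in> ?X. sum f P = N}. gamma_multinomial P z f)
      = Gamma (real N - 1/2) * sum z P ^ N / fact N" if "N \<in> {1..}" for N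
  proof -
    have "(\<Sum>f\<in>{f \<in> ?X. sum f P = N}. gamma_multinomial P z f)
        = (\<Sum>f\<in>{f \<in> vanishing_outside P. sum f P = N}. Gamma (real N - 1/2) * (\<Prod>p\<in>P. z p ^ f p / fact (f p)))"
      unfolding fibre[OF that] by (intro sum.cong) (auto simp: gamma_multinomial_def simp del: of_nat_sum)
    then show ?thesis
      by (simp add: sum_distrib_left[symmetric] sum_multinomial_fact[OF \<open>finite P\<close>])
  qed
  have "((\<lambda>N. Gamma (real N - 1/2) * sum z P ^ N / fact N)
      has_sum 2 * sqrt pi * (1 - sqrt (1 - sum z P))) {1..}"
    by (rule has_sum_Gamma_series) (use assms in \<open>auto intro: sum_nonneg\<close>)
  then have "((\<lambda>N. \<Sum>f\<in>{f \<in> ?X. sum f P = N}. gamma_multinomial P z f)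
      has_sum 2 * sqrt pi * (1 - sqrt (1 - sum z P))) {1..}"
    by (rule has_sum_cong[THEN iffD1, rotated]) (rule fibre_sum[symmetric])
  then show ?thesis
  proof (rule has_sum_fibres_iff[where h="\<lambda>f. sum f P", THEN iffD1, rotated -1])
    show "finite {f \<in> ?X. sum f P = N}" if "N \<in> {1..}" for N
      unfolding fibre[OF that] using \<open>finite P\<close> by (rule finite_vanishing_outside_sum_eq)
    show "0 \<le> gamma_multinomial P z f" if "f \<in> ?X" for f
      using that z_nonneg by (auto intro: gamma_multinomial_nonneg)
  qed auto
qed

lemma gamma_multinomial_exp_tilt:
  assumes "finite P"
  shows "gamma_multinomial P (\<lambda>p. z p * exp (- w p)) f
     = exp (- (\<Sum>p\<in>P. w p * real (f p))) * gamma_multinomial P z f"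
proof -
  have "(\<Prod>p\<in>P. (z p * exp (- w p)) ^ f p / fact (f p))
      = (\<Prod>p\<in>P. exp (- (w p * real (f p)))) * (\<Prod>p\<in>P. z p ^ f p / fact (f p))"
    by (simp add: prod.distrib[symmetric] power_mult_distrib exp_of_nat_mult[symmetric] mult_ac)
  then show ?thesis
    using assms by (simp add: gamma_multinomial_def exp_sum sum_negf[symmetric])
qed

section \<open>Laplace transform of the subordinated process\<close>

lemma vecs_eq_vanishing_outside: "vecs q = vanishing_outside {..<q}"
  by (auto simp: vecs_def vanishing_outside_def)

lemma Omega_eq_vanishing_outside:
  "Omega K m = {v \<in> vanishing_outside {1..K}. (\<Sum>j=1..K. j * v j) = m}"
  by (auto simp: Omega_def vanishing_outside_def not_le)

lemma finite_Omega: "finite (Omega K m)"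
proof (rule finite_subset[OF _ finite_vanishing_outside_bounded[of "{1..K}" m]])
  have "v j \<le> m" if "v \<in> Omega K m" for v j
  proof (cases "j \<in> {1..K}")
    case True
    then have "v j \<le> j * v j"
      by simp
    also have "\<dots> \<le> (\<Sum>j=1..K. j * v j)"
      using True by (intro member_le_sum) auto
    finally show ?thesis
      using that by (simp add: Omega_def)
  next
    case False
    then show ?thesis
      using that by (auto simp: Omega_eq_vanishing_outside vanishing_outside_def)
  qed
  then show "Omega K m \<subseteq> {v \<in> vanishing_outside {1..K}. \<forall>j. v j \<le> m}"
    by (auto simp: Omega_eq_vanishing_outside)
qed simp

lemma has_sum_exp_series:
  fixes y :: real
  assumes "0 \<le> y"
  shows "((\<lambda>n. y ^ n / fact n) has_sum exp y) UNIV"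
proof -
  have "(\<lambda>n. y ^ n / fact n) sums exp y"
    using exp_converges[of y] by (simp add: divide_inverse mult.commute)
  then show ?thesis
    by (rule sums_nonneg_imp_has_sum) (use assms in auto)
qed

lemma prod_Omega_exp_tilt:
  fixes y :: "nat \<Rightarrow> real"
  assumes "v \<in> Omega K m"
  shows "(\<Prod>j=1..K. (y j * exp (- w * real j)) ^ v j / fact (v j) * exp (- y j))
           = (\<Prod>j=1..K. y j ^ v j / fact (v j) * exp (- y j)) * exp (- w * real m)"
proof -
  have "real m = (\<Sum>j=1..K. real j * real (v j))"
    using assms by (simp add: Omega_def flip: of_nat_mult of_nat_sum)
  then have "exp (- w * real m) = (\<Prod>j=1..K. exp (- w * real j) ^ v j)"
    by (simp add: exp_sum sum_distrib_left exp_of_nat_mult[symmetric] mult_ac flip: sum_negf)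
  then show ?thesis
    by (simp add: power_mult_distrib prod.distrib[symmetric] mult_ac)
qed

lemma has_sum_gcp_laplace:
  fixes y :: "nat \<Rightarrow> real"
  assumes y_nonneg: "\<And>j. j \<in> {1..K} \<Longrightarrow> 0 \<le> y j" and "0 \<le> w"
  shows "((\<lambda>m. (\<Sum>v\<in>Omega K m. \<Prod>j=1..K. y j ^ v j / fact (v j) * exp (- y j)) * exp (- w * real m))
           has_sum (\<Prod>j=1..K. exp (- y j * (1 - exp (- w * real j))))) UNIV"
proof -
  define \<phi> where "\<phi> j n = (y j * exp (- w * real j)) ^ n / fact n * exp (- y j)" for j n
  have \<phi>_has_sum: "(\<phi> j has_sum exp (- y j * (1 - exp (- w * real j)))) UNIV" if "j \<in> {1..K}" for j
  proof -
    have "((\<lambda>n. (y j * exp (- w * real j)) ^ n / fact n) has_sum exp (y j * exp (- w * real j))) UNIV"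
      using y_nonneg[OF that] by (intro has_sum_exp_series) simp
    then have "(\<phi> j has_sum exp (y j * exp (- w * real j)) * exp (- y j)) UNIV"
      unfolding \<phi>_def by (rule has_sum_cmult_left)
    then show ?thesis
      by (simp add: exp_add[symmetric] algebra_simps)
  qed
  have "((\<lambda>v. \<Prod>j=1..K. \<phi> j (v j)) has_sum (\<Prod>j=1..K. exp (- y j * (1 - exp (- w * real j)))))
      (vanishing_outside {1..K})"
    by (intro has_sum_prod_vanishing_outside[OF finite_atLeastAtMost \<phi>_has_sum])
       (auto simp: \<phi>_def y_nonneg)
  then have "((\<lambda>m. \<Sum>v\<in>{v \<in> vanishing_outside {1..K}. (\<Sum>j=1..K. j * v j) = m}. \<Prod>j=1..K. \<phi> j (v j))
      has_sum (\<Prod>j=1..K. exp (- y j * (1 - exp (- w * real j))))) UNIV"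
  proof (rule has_sum_fibres_iff[THEN iffD2, rotated -1])
    show "finite {v \<in> vanishing_outside {1..K}. (\<Sum>j=1..K. j * v j) = m}" for m
      using finite_Omega[of K m] by (simp only: Omega_eq_vanishing_outside)
  qed (auto simp: \<phi>_def y_nonneg intro!: prod_nonneg)
  then show ?thesis
  proof (rule has_sum_cong[THEN iffD1, rotated])
    fix m
    show "(\<Sum>v\<in>{v \<in> vanishing_outside {1..K}. (\<Sum>j=1..K. j * v j) = m}. \<Prod>j=1..K. \<phi> j (v j))
        = (\<Sum>v\<in>Omega K m. \<Prod>j=1..K. y j ^ v j / fact (v j) * exp (- y j)) * exp (- w * real m)"
      unfolding Omega_eq_vanishing_outside[symmetric] sum_distrib_right \<phi>_def
      by (rule sum.cong[OF refl prod_Omega_exp_tilt])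
  qed
qed

definition mgcp_exponent :: "nat \<Rightarrow> (nat \<Rightarrow> nat) \<Rightarrow> (nat \<Rightarrow> nat \<Rightarrow> real) \<Rightarrow> (nat \<Rightarrow> real) \<Rightarrow> real" where
  "mgcp_exponent q k lam u = (\<Sum>i<q. \<Sum>j=1..k i. lam i j * (1 - exp (- u i * real j)))"

lemma mgcp_exponent_nonneg:
  assumes "\<And>i j. i < q \<Longrightarrow> 1 \<le> j \<Longrightarrow> j \<le> k i \<Longrightarrow> 0 \<le> lam i j" "\<And>i. i < q \<Longrightarrow> 0 \<le> u i"
  shows "0 \<le> mgcp_exponent q k lam u"
  unfolding mgcp_exponent_def using assms by (auto intro!: sum_nonneg mult_nonneg_nonneg)

lemma has_sum_mgcp_laplace:
  assumes "0 \<le> s" and lam_nonneg: "\<And>i j. i < q \<Longrightarrow> 1 \<le> j \<Longrightarrow> j \<le> k i \<Longrightarrow> 0 \<le> lam i j"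
    and u_nonneg: "\<And>i. i < q \<Longrightarrow> 0 \<le> u i"
  shows "((\<lambda>n. mgcp_pmf q k lam s n * exp (- (\<Sum>i<q. u i * real (n i))))
           has_sum exp (- s * mgcp_exponent q k lam u)) (vecs q)"
proof -
  define h where "h i m = (\<Sum>v\<in>Omega (k i) m. \<Prod>j=1..k i. (lam i j * s) ^ v j / fact (v j) * exp (- (lam i j * s)))
    * exp (- u i * real m)" for i m
  have h_has_sum: "(h i has_sum (\<Prod>j=1..k i. exp (- (lam i j * s) * (1 - exp (- u i * real j))))) UNIV"
    if "i \<in> {..<q}" for i
    unfolding h_def by (rule has_sum_gcp_laplace) (use that \<open>0 \<le> s\<close> lam_nonneg u_nonneg in auto)
  have "((\<lambda>n. \<Prod>i<q. h i (n i)) has_sum (\<Prod>i<q. \<Prod>j=1..k i. exp (- (lam i j * s) * (1 - exp (- u i * real j)))))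
      (vanishing_outside {..<q})"
    using \<open>0 \<le> s\<close> lam_nonneg
    by (intro has_sum_prod_vanishing_outside[OF finite_lessThan h_has_sum])
       (auto simp: h_def intro!: mult_nonneg_nonneg sum_nonneg prod_nonneg)
  also have "(\<Prod>i<q. \<Prod>j=1..k i. exp (- (lam i j * s) * (1 - exp (- u i * real j))))
      = exp (- s * mgcp_exponent q k lam u)"
    by (simp add: mgcp_exponent_def exp_sum sum_distrib_left algebra_simps)
  finally show ?thesis
    unfolding vecs_eq_vanishing_outside
  proof (rule has_sum_cong[THEN iffD2, rotated])
    fix n :: "nat \<Rightarrow> nat" assume "n \<in> vanishing_outside {..<q}"
    then show "mgcp_pmf q k lam s n * exp (- (\<Sum>i<q. u i * real (n i))) = (\<Prod>i<q. h i (n i))"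
      by (simp add: mgcp_pmf_def h_def vecs_eq_vanishing_outside prod.distrib exp_sum sum_negf[symmetric])
  qed
qed

lemma mgcp_pmf_nonneg:
  assumes "0 \<le> s" "\<And>i j. i < q \<Longrightarrow> 1 \<le> j \<Longrightarrow> j \<le> k i \<Longrightarrow> 0 \<le> lam i j"
  shows "0 \<le> mgcp_pmf q k lam s n"
  unfolding mgcp_pmf_def using assms by (auto intro!: prod_nonneg sum_nonneg)

lemma continuous_on_mgcp_pmf: "continuous_on UNIV (\<lambda>s. mgcp_pmf q k lam s n)"
  unfolding mgcp_pmf_def by (cases "n \<in> vecs q") (auto intro!: continuous_intros)

lemma has_sum_subordinated_laplace:
  fixes M :: "real measure"
  assumes "prob_space M" "sets M = sets borel" and M_nonneg: "AE s in M. 0 \<le> s"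
    and lam_nonneg: "\<And>i j. i < q \<Longrightarrow> 1 \<le> j \<Longrightarrow> j \<le> k i \<Longrightarrow> 0 \<le> lam i j"
    and u_nonneg: "\<And>i. i < q \<Longrightarrow> 0 \<le> u i"
  shows "((\<lambda>n. (\<integral>s. mgcp_pmf q k lam s n \<partial>M) * exp (- (\<Sum>i<q. u i * real (n i))))
           has_sum (\<integral>s. exp (- s * mgcp_exponent q k lam u) \<partial>M)) (vecs q)"
proof -
  have measurable_iff: "borel_measurable M = borel_measurable borel"
    using assms(2) by (rule measurable_cong_sets) simp
  have exponent_nonneg: "0 \<le> mgcp_exponent q k lam u"
    using lam_nonneg u_nonneg by (rule mgcp_exponent_nonneg)
  have "((\<lambda>n. \<integral>s. mgcp_pmf q k lam s n * exp (- (\<Sum>i<q. u i * real (n i))) \<partial>M)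
      has_sum (\<integral>s. exp (- s * mgcp_exponent q k lam u) \<partial>M)) (vecs q)"
  proof (rule has_sum_integral_nonneg)
    show "countable (vecs q)"
      by (simp add: vecs_eq_vanishing_outside countable_vanishing_outside)
    show "integrable M (\<lambda>s. exp (- s * mgcp_exponent q k lam u))"
      using M_nonneg exponent_nonneg
      by (intro finite_measure.integrable_const_bound[where B=1])
         (auto simp: measurable_iff prob_space.finite_measure[OF assms(1)] mult_nonneg_nonneg
               elim!: eventually_mono intro: borel_measurable_continuous_onI continuous_intros)
    show "AE s in M. (\<forall>n\<in>vecs q. 0 \<le> mgcp_pmf q k lam s n * exp (- (\<Sum>i<q. u i * real (n i))))
        \<and> ((\<lambda>n. mgcp_pmf q k lam s n * exp (- (\<Sum>i<q. u i * real (n i))))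
             has_sum exp (- s * mgcp_exponent q k lam u)) (vecs q)"
      using M_nonneg
    proof eventually_elim
      case (elim s)
      then show ?case
        using has_sum_mgcp_laplace[OF elim lam_nonneg u_nonneg] mgcp_pmf_nonneg[OF elim lam_nonneg]
        by auto
    qed
  qed (auto simp: measurable_iff intro!: borel_measurable_continuous_onI continuous_intros
        continuous_on_mgcp_pmf)
  then show ?thesis
    by simp
qed

section \<open>The Levy measure\<close>

(* A family (n_ij) of Omega_fam is handled uncurried, as a function on index_pairs q k. *)
definition index_pairs :: "nat \<Rightarrow> (nat \<Rightarrow> nat) \<Rightarrow> (nat \<times> nat) set" where
  "index_pairs q k = Sigma {..<q} (\<lambda>i. {1..k i})"

lemma finite_index_pairs [simp]: "finite (index_pairs q k)"
  by (simp add: index_pairs_def)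

lemma sum_index_pairs: "sum g (index_pairs q k) = (\<Sum>i<q. \<Sum>j=1..k i. g (i, j))"
  by (simp add: index_pairs_def sum.Sigma)

lemma prod_index_pairs: "prod g (index_pairs q k) = (\<Prod>i<q. \<Prod>j=1..k i. g (i, j))"
  by (simp add: index_pairs_def prod.Sigma)

definition weighted_row_sum :: "(nat \<Rightarrow> nat) \<Rightarrow> (nat \<times> nat \<Rightarrow> nat) \<Rightarrow> nat \<Rightarrow> nat" where
  "weighted_row_sum k f i = (\<Sum>j=1..k i. j * f (i, j))"

lemma weighted_row_sum_in_posvecs:
  assumes "f \<in> vanishing_outside (index_pairs q k)" "1 \<le> sum f (index_pairs q k)"
  shows "weighted_row_sum k f \<in> posvecs q"
proof -
  obtain i j where ij: "(i, j) \<in> index_pairs q k" "f (i, j) \<noteq> 0"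
    using assms(2) by (metis not_one_le_zero prod.collapse sum.neutral)
  then have "f (i, j) \<le> weighted_row_sum k f i"
    unfolding weighted_row_sum_def index_pairs_def
    by (intro order_trans[OF _ member_le_sum[of j]]) auto
  with ij have "weighted_row_sum k f \<noteq> (\<lambda>_. 0)"
    by (metis le_zero_eq)
  moreover have "weighted_row_sum k f \<in> vecs q"
    using assms(1) by (auto simp: vecs_def weighted_row_sum_def vanishing_outside_def index_pairs_def)
  ultimately show ?thesis
    by (simp add: posvecs_def)
qed

lemma curry_mem_Omega_fam:
  assumes "f \<in> vanishing_outside (index_pairs q k)" "weighted_row_sum k f = n"
  shows "curry f \<in> Omega_fam q k n"
proof -
  have "curry f i \<in> Omega (k i) (n i)" if "i < q" for i
    using assms that
    by (auto simp: Omega_eq_vanishing_outside vanishing_outside_def index_pairs_def weighted_row_sum_def)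
  moreover have "curry f i = (\<lambda>_. 0)" if "q \<le> i" for i
    using assms(1) that by (auto simp: vanishing_outside_def index_pairs_def)
  ultimately show ?thesis
    by (simp add: Omega_fam_def)
qed

lemma case_prod_Omega_fam_vanishing_outside:
  assumes "nn \<in> Omega_fam q k n"
  shows "case_prod nn \<in> vanishing_outside (index_pairs q k)"
proof -
  have "nn i j = 0" if "(i, j) \<notin> index_pairs q k" for i j
  proof (cases "i < q")
    case True
    with that have "j \<notin> {1..k i}"
      by (simp add: index_pairs_def)
    moreover have "nn i \<in> Omega (k i) (n i)"
      using assms True by (simp add: Omega_fam_def)
    ultimately show ?thesis
      by (simp add: Omega_eq_vanishing_outside vanishing_outside_def)
  next
    case False
    with assms show ?thesis
      by (simp add: Omega_fam_def)
  qed
  then show ?thesis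
    by (auto simp: vanishing_outside_def)
qed

lemma weighted_row_sum_case_prod_Omega_fam:
  assumes "nn \<in> Omega_fam q k n" "n \<in> vecs q"
  shows "weighted_row_sum k (case_prod nn) = n"
proof
  fix i
  show "weighted_row_sum k (case_prod nn) i = n i"
  proof (cases "i < q")
    case True
    then have "nn i \<in> Omega (k i) (n i)"
      using assms(1) by (simp add: Omega_fam_def)
    then show ?thesis
      by (simp add: weighted_row_sum_def Omega_eq_vanishing_outside)
  next
    case False
    with assms show ?thesis
      by (simp add: weighted_row_sum_def Omega_fam_def vecs_def)
  qed
qed

lemma Omega_fam_eq_fibre:
  assumes n: "n \<in> posvecs q"
  shows "{f \<in> {f \<in> vanishing_outside (index_pairs q k). 1 \<le> sum f (index_pairs q k)}.
           weighted_row_sum k f = n} = case_prod ` Omega_fam q k n"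
proof (intro equalityI subsetI)
  fix f assume "f \<in> {f \<in> {f \<in> vanishing_outside (index_pairs q k). 1 \<le> sum f (index_pairs q k)}.
    weighted_row_sum k f = n}"
  then have f: "f \<in> vanishing_outside (index_pairs q k)" and row: "weighted_row_sum k f = n"
    by auto
  then have "curry f \<in> Omega_fam q k n"
    by (rule curry_mem_Omega_fam)
  then show "f \<in> case_prod ` Omega_fam q k n"
    by (metis case_prod_curry image_eqI)
next
  fix f assume "f \<in> case_prod ` Omega_fam q k n"
  then obtain nn where f: "f = case_prod nn" and nn: "nn \<in> Omega_fam q k n"
    by blast
  have vanishing: "f \<in> vanishing_outside (index_pairs q k)"
    unfolding f using nn by (rule case_prod_Omega_fam_vanishing_outside)
  have "n \<in> vecs q"
    using n by (simp add: posvecs_def)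
  with nn have row: "weighted_row_sum k f = n"
    unfolding f by (rule weighted_row_sum_case_prod_Omega_fam)
  have "1 \<le> sum f (index_pairs q k)"
  proof (rule ccontr)
    assume "\<not> 1 \<le> sum f (index_pairs q k)"
    then have "sum f (index_pairs q k) = 0"
      by linarith
    with vanishing have "f = (\<lambda>_. 0)"
      by (auto simp: vanishing_outside_def fun_eq_iff)
    then have "weighted_row_sum k f = (\<lambda>_. 0)"
      by (simp add: weighted_row_sum_def fun_eq_iff)
    with row n show False
      by (simp add: posvecs_def)
  qed
  with vanishing row show "f \<in> {f \<in> {f \<in> vanishing_outside (index_pairs q k). 1 \<le> sum f (index_pairs q k)}.
    weighted_row_sum k f = n}"
    by simp
qed

lemma finite_Omega_fam: "finite (Omega_fam q k n)"
proof (rule finite_subset)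
  show "Omega_fam q k n \<subseteq> {nn. \<forall>i. (i \<in> {..<q} \<longrightarrow> nn i \<in> (\<Union>i<q. Omega (k i) (n i)))
      \<and> (i \<notin> {..<q} \<longrightarrow> nn i = (\<lambda>_. 0))}"
    by (auto simp: Omega_fam_def)
  show "finite \<dots>"
    by (intro finite_set_of_finite_funs) (auto simp: finite_Omega)
qed

definition levy_mass :: "nat \<Rightarrow> (nat \<Rightarrow> nat) \<Rightarrow> (nat \<times> nat \<Rightarrow> real) \<Rightarrow> (nat \<Rightarrow> nat) \<Rightarrow> real" where
  "levy_mass q k z n = (\<Sum>nn\<in>Omega_fam q k n. gamma_multinomial (index_pairs q k) z (case_prod nn))"

lemma levy_mass_nonneg:
  assumes "n \<in> posvecs q" "\<And>p. p \<in> index_pairs q k \<Longrightarrow> 0 \<le> z p"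
  shows "0 \<le> levy_mass q k z n"
  unfolding levy_mass_def
proof (intro sum_nonneg gamma_multinomial_nonneg)
  fix nn assume "nn \<in> Omega_fam q k n"
  then show "1 \<le> sum (case_prod nn) (index_pairs q k)"
    using Omega_fam_eq_fibre[OF assms(1), of k] by blast
qed (use assms(2) in simp)

lemma has_sum_levy_mass:
  assumes "\<And>p. p \<in> index_pairs q k \<Longrightarrow> 0 \<le> z p" "sum z (index_pairs q k) < 1"
  shows "(levy_mass q k z has_sum 2 * sqrt pi * (1 - sqrt (1 - sum z (index_pairs q k)))) (posvecs q)"
proof -
  let ?X = "{f \<in> vanishing_outside (index_pairs q k). 1 \<le> sum f (index_pairs q k)}"
  have "((\<lambda>n. \<Sum>f\<in>{f \<in> ?X. weighted_row_sum k f = n}. gamma_multinomial (index_pairs q k) z f)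
      has_sum 2 * sqrt pi * (1 - sqrt (1 - sum z (index_pairs q k)))) (posvecs q)"
    using has_sum_gamma_multinomial[OF finite_index_pairs assms]
  proof (rule has_sum_fibres_iff[THEN iffD2, rotated -1])
    show "finite {f \<in> ?X. weighted_row_sum k f = n}" if "n \<in> posvecs q" for n
      unfolding Omega_fam_eq_fibre[OF that] by (intro finite_imageI finite_Omega_fam)
  qed (use assms in \<open>auto intro: weighted_row_sum_in_posvecs gamma_multinomial_nonneg\<close>)
  then show ?thesis
  proof (rule has_sum_cong[THEN iffD1, rotated])
    fix n assume "n \<in> posvecs q"
    have "inj_on case_prod (Omega_fam q k n)"
      by (rule inj_onI) (metis curry_case_prod)
    then show "(\<Sum>f\<in>{f \<in> ?X. weighted_row_sum k f = n}. gamma_multinomial (index_pairs q k) z f) = levy_mass q k z n"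
      unfolding Omega_fam_eq_fibre[OF \<open>n \<in> posvecs q\<close>] levy_mass_def by (simp add: sum.reindex)
  qed
qed

lemma levy_mass_exp_tilt:
  assumes "n \<in> posvecs q"
  shows "levy_mass q k (\<lambda>(i, j). z (i, j) * exp (- u i * real j)) n
           = exp (- (\<Sum>i<q. u i * real (n i))) * levy_mass q k z n"
proof -
  have "gamma_multinomial (index_pairs q k) (\<lambda>(i, j). z (i, j) * exp (- u i * real j)) (case_prod nn)
      = exp (- (\<Sum>i<q. u i * real (n i))) * gamma_multinomial (index_pairs q k) z (case_prod nn)"
    if "nn \<in> Omega_fam q k n" for nn
  proof -
    have "(\<Sum>p\<in>index_pairs q k. (case p of (i, j) \<Rightarrow> u i * real j) * real (case_prod nn p))
        = (\<Sum>i<q. u i * real (\<Sum>j=1..k i. j * nn i j))"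
      by (simp add: sum_index_pairs sum_distrib_left mult_ac)
    also have "\<dots> = (\<Sum>i<q. u i * real (n i))"
      using that by (simp add: Omega_fam_def Omega_def)
    moreover have "(\<lambda>(i, j). z (i, j) * exp (- u i * real j))
        = (\<lambda>p. z p * exp (- (case p of (i, j) \<Rightarrow> u i * real j)))"
      by (auto simp: fun_eq_iff)
    ultimately show ?thesis
      by (simp only: gamma_multinomial_exp_tilt[OF finite_index_pairs])
  qed
  then show ?thesis
    unfolding levy_mass_def sum_distrib_left by (rule sum.cong[OF refl])
qed

lemma levyX_eq_levy_mass:
  assumes "\<And>i. i < q \<Longrightarrow> 1 \<le> k i"
  shows "levyX q k lam \<delta> \<gamma> A = \<delta> * sqrt (2 * lam_total q k lam + \<gamma>\<^sup>2) / (2 * sqrt pi) *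
    (\<Sum>\<^sub>\<infinity>n\<in>posvecs q. of_bool (\<forall>i<q. n i \<in> A i) *
       levy_mass q k (\<lambda>(i, j). 2 * lam i j / (2 * lam_total q k lam + \<gamma>\<^sup>2)) n)"
proof -
  \<comment> \<open>The indicator of \<open>n i \<in> A i\<close> occurs once for every \<open>j\<close>, hence \<open>k i \<ge> 1\<close> is needed.\<close>
  have indicator: "(\<Prod>i<q. \<Prod>j=1..k i. a i j * of_bool (B i) / b i j)
      = of_bool (\<forall>i<q. B i) * (\<Prod>i<q. \<Prod>j=1..k i. a i j / b i j)" for a b :: "nat \<Rightarrow> nat \<Rightarrow> real" and B
  proof (cases "\<forall>i<q. B i")
    case False
    then obtain i where "i < q" "\<not> B i"
      by blast
    then have "(\<Prod>j=1..k i. a i j * of_bool (B i) / b i j) = 0"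
      using assms[OF \<open>i < q\<close>] by (intro prod_zero bexI[of _ 1]) auto
    with \<open>i < q\<close> False show ?thesis
      by (auto intro!: prod_zero)
  qed simp
  show ?thesis
    unfolding levyX_def levy_mass_def sum_distrib_left
    by (intro arg_cong[where f="\<lambda>x. _ * x"] infsum_cong sum.cong refl)
       (unfold indicator gamma_multinomial_def sum_index_pairs prod_index_pairs prod.case,
        simp add: mult.left_commute)
qed

locale mgcp_inverse_gaussian =
  fixes q :: nat and k :: "nat \<Rightarrow> nat" and lam :: "nat \<Rightarrow> nat \<Rightarrow> real" and \<delta> \<gamma> :: real
  assumes k_pos: "\<And>i. i < q \<Longrightarrow> 1 \<le> k i"
    and lam_pos: "\<And>i j. i < q \<Longrightarrow> 1 \<le> j \<Longrightarrow> j \<le> k i \<Longrightarrow> 0 < lam i j"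
    and \<delta>_pos: "0 < \<delta>" and \<gamma>_pos: "0 < \<gamma>"
begin

definition scale :: real where
  "scale = 2 * lam_total q k lam + \<gamma>\<^sup>2"

definition rate_weight :: "nat \<times> nat \<Rightarrow> real" where
  "rate_weight = (\<lambda>(i, j). 2 * lam i j / scale)"

definition levy_constant :: real where
  "levy_constant = \<delta> * sqrt scale / (2 * sqrt pi)"

lemma lam_nonneg: "i < q \<Longrightarrow> 1 \<le> j \<Longrightarrow> j \<le> k i \<Longrightarrow> 0 \<le> lam i j"
  using lam_pos by (simp add: less_imp_le)

lemma scale_pos: "0 < scale"
proof -
  have "0 \<le> lam_total q k lam"
    unfolding lam_total_def by (intro sum_nonneg) (auto intro: lam_nonneg)
  then show ?thesis
    unfolding scale_def using \<gamma>_pos by (simp add: add_nonneg_pos)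
qed

lemma levyX_eq:
  "levyX q k lam \<delta> \<gamma> A
     = levy_constant * (\<Sum>\<^sub>\<infinity>n\<in>posvecs q. of_bool (\<forall>i<q. n i \<in> A i) * levy_mass q k rate_weight n)"
  by (simp only: levyX_eq_levy_mass[OF k_pos] levy_constant_def rate_weight_def scale_def)

lemma levyX_singleton:
  assumes "n \<in> posvecs q"
  shows "levyX q k lam \<delta> \<gamma> (\<lambda>i. {n i}) = levy_constant * levy_mass q k rate_weight n"
proof -
  have "m = n" if "m \<in> posvecs q" "\<forall>i<q. m i = n i" for m
  proof
    fix i
    show "m i = n i"
      using that assms by (cases "i < q") (auto simp: posvecs_def vecs_def)
  qed
  then have "(\<Sum>\<^sub>\<infinity>m\<in>posvecs q. of_bool (\<forall>i<q. m i \<in> {n i}) * levy_mass q k rate_weight m)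
      = (\<Sum>\<^sub>\<infinity>m\<in>{n}. levy_mass q k rate_weight m)"
    using assms by (intro infsum_cong_neutral) auto
  then show ?thesis
    unfolding levyX_eq by simp
qed

lemma has_sum_levy_mass_exp:
  assumes u_nonneg: "\<And>i. i < q \<Longrightarrow> 0 \<le> u i"
  shows "((\<lambda>n. exp (- (\<Sum>i<q. u i * real (n i))) * levy_mass q k rate_weight n)
           has_sum 2 * sqrt pi * (1 - sqrt (2 * mgcp_exponent q k lam u + \<gamma>\<^sup>2) / sqrt scale)) (posvecs q)"
proof -
  define z where "z = (\<lambda>(i, j). rate_weight (i, j) * exp (- u i * real j))"
  have z_nonneg: "0 \<le> z p" if "p \<in> index_pairs q k" for p
    using that scale_pos
    by (auto simp: z_def rate_weight_def index_pairs_def intro!: divide_nonneg_pos mult_nonneg_nonneg lam_nonneg)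
  have "lam_total q k lam - mgcp_exponent q k lam u = (\<Sum>i<q. \<Sum>j=1..k i. lam i j * exp (- u i * real j))"
    by (simp add: lam_total_def mgcp_exponent_def algebra_simps flip: sum_subtractf)
  then have "sum z (index_pairs q k) = 2 * (lam_total q k lam - mgcp_exponent q k lam u) / scale"
    by (simp add: z_def rate_weight_def sum_index_pairs sum_divide_distrib sum_distrib_left mult_ac)
  then have one_minus: "1 - sum z (index_pairs q k) = (2 * mgcp_exponent q k lam u + \<gamma>\<^sup>2) / scale"
    using scale_pos by (simp add: scale_def field_simps)
  moreover have "0 < (2 * mgcp_exponent q k lam u + \<gamma>\<^sup>2) / scale"
    using scale_pos \<gamma>_pos mgcp_exponent_nonneg[OF lam_nonneg u_nonneg] by (simp add: add_nonneg_pos)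
  ultimately have "sum z (index_pairs q k) < 1"
    by linarith
  with z_nonneg have "(levy_mass q k z has_sum 2 * sqrt pi * (1 - sqrt (1 - sum z (index_pairs q k))))
      (posvecs q)"
    by (rule has_sum_levy_mass)
  then have "(levy_mass q k z has_sum 2 * sqrt pi * (1 - sqrt (2 * mgcp_exponent q k lam u + \<gamma>\<^sup>2) / sqrt scale))
      (posvecs q)"
    by (simp only: one_minus real_sqrt_divide)
  then show ?thesis
  proof (rule has_sum_cong[THEN iffD1, rotated])
    fix n assume "n \<in> posvecs q"
    then show "levy_mass q k z n = exp (- (\<Sum>i<q. u i * real (n i))) * levy_mass q k rate_weight n"
      unfolding z_def by (rule levy_mass_exp_tilt[where z=rate_weight])
  qed
qed

lemma has_sum_levy_mass_rate_weight:
  "(levy_mass q k rate_weight has_sum 2 * sqrt pi * (1 - \<gamma> / sqrt scale)) (posvecs q)"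
  using has_sum_levy_mass_exp[of "\<lambda>_. 0"] \<gamma>_pos by (simp add: mgcp_exponent_def)

lemma levyX_rectangle_has_sum:
  "((\<lambda>n. levyX q k lam \<delta> \<gamma> (\<lambda>i. {n i})) has_sum levyX q k lam \<delta> \<gamma> A) {n \<in> posvecs q. \<forall>i<q. n i \<in> A i}"
proof -
  let ?B = "{n \<in> posvecs q. \<forall>i<q. n i \<in> A i}"
  have "levy_mass q k rate_weight summable_on ?B"
    using has_sum_levy_mass_rate_weight
    by (rule summable_on_subset_banach[OF has_sum_imp_summable]) auto
  then have constant_times: "((\<lambda>n. levy_constant * levy_mass q k rate_weight n)
      has_sum levy_constant * (\<Sum>\<^sub>\<infinity>n\<in>?B. levy_mass q k rate_weight n)) ?B"
    by (intro has_sum_cmult_right has_sum_infsum)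
  have restrict: "(\<Sum>\<^sub>\<infinity>n\<in>posvecs q. of_bool (\<forall>i<q. n i \<in> A i) * levy_mass q k rate_weight n)
      = (\<Sum>\<^sub>\<infinity>n\<in>?B. levy_mass q k rate_weight n)"
    by (intro infsum_cong_neutral) auto
  show ?thesis
    unfolding levyX_eq[of A] restrict
  proof (intro has_sum_cong[THEN iffD2, OF _ constant_times])
    fix n assume "n \<in> ?B"
    then show "levyX q k lam \<delta> \<gamma> (\<lambda>i. {n i}) = levy_constant * levy_mass q k rate_weight n"
      by (simp add: levyX_singleton)
  qed
qed

lemma levyX_singleton_nonneg:
  assumes "n \<in> posvecs q"
  shows "0 \<le> levyX q k lam \<delta> \<gamma> (\<lambda>i. {n i})"
proof -
  have "0 \<le> levy_mass q k rate_weight n"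
    using assms scale_pos
    by (intro levy_mass_nonneg) (auto simp: rate_weight_def index_pairs_def intro!: divide_nonneg_pos lam_nonneg)
  then show ?thesis
    using scale_pos \<delta>_pos by (simp add: levyX_singleton[OF assms] levy_constant_def)
qed

lemma has_sum_levyX_laplace:
  assumes u_nonneg: "\<And>i. i < q \<Longrightarrow> 0 \<le> u i"
  shows "((\<lambda>n. (1 - exp (- (\<Sum>i<q. u i * real (n i)))) * levyX q k lam \<delta> \<gamma> (\<lambda>i. {n i}))
           has_sum \<delta> * (sqrt (2 * mgcp_exponent q k lam u + \<gamma>\<^sup>2) - \<gamma>)) (posvecs q)"
proof -
  let ?E = "\<lambda>n. exp (- (\<Sum>i<q. u i * real (n i)))"
  let ?r = "sqrt (2 * mgcp_exponent q k lam u + \<gamma>\<^sup>2)"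
  have "((\<lambda>n. levy_constant * levy_mass q k rate_weight n + - (levy_constant * (?E n * levy_mass q k rate_weight n)))
      has_sum levy_constant * (2 * sqrt pi * (1 - \<gamma> / sqrt scale))
        + - (levy_constant * (2 * sqrt pi * (1 - ?r / sqrt scale)))) (posvecs q)"
    by (intro has_sum_add has_sum_uminusI has_sum_cmult_right has_sum_levy_mass_rate_weight
        has_sum_levy_mass_exp u_nonneg)
  also have "levy_constant * (2 * sqrt pi * (1 - \<gamma> / sqrt scale))
      + - (levy_constant * (2 * sqrt pi * (1 - ?r / sqrt scale))) = \<delta> * (?r - \<gamma>)"
    using scale_pos by (simp add: levy_constant_def field_simps)
  finally show ?thesis
    by (rule has_sum_cong[THEN iffD1, rotated]) (simp add: levyX_singleton algebra_simps)
qed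

lemma has_sum_sub_pmf_laplace:
  assumes "prob_space (\<mu> t)" "sets (\<mu> t) = sets borel" "AE x in \<mu> t. 0 \<le> x"
    and laplace: "\<And>s. 0 \<le> s \<Longrightarrow> (\<integral>x. exp (- s * x) \<partial>\<mu> t) = exp (- \<delta> * t * (sqrt (2 * s + \<gamma>\<^sup>2) - \<gamma>))"
    and u_nonneg: "\<And>i. i < q \<Longrightarrow> 0 \<le> u i"
  shows "((\<lambda>n. sub_pmf q k lam \<mu> t n * exp (- (\<Sum>i<q. u i * real (n i))))
           has_sum exp (- t * (\<delta> * (sqrt (2 * mgcp_exponent q k lam u + \<gamma>\<^sup>2) - \<gamma>)))) (vecs q)"
proof -
  let ?\<psi> = "mgcp_exponent q k lam u"
  have "((\<lambda>n. sub_pmf q k lam \<mu> t n * exp (- (\<Sum>i<q. u i * real (n i))))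
      has_sum (\<integral>s. exp (- s * ?\<psi>) \<partial>\<mu> t)) (vecs q)"
    unfolding sub_pmf_def using assms(1-3) by (intro has_sum_subordinated_laplace lam_nonneg u_nonneg)
  also have "(\<integral>s. exp (- s * ?\<psi>) \<partial>\<mu> t) = exp (- t * (\<delta> * (sqrt (2 * ?\<psi> + \<gamma>\<^sup>2) - \<gamma>)))"
    using laplace[OF mgcp_exponent_nonneg[OF lam_nonneg u_nonneg]] by (simp add: mult.commute mult.left_commute)
  finally show ?thesis .
qed

lemma levy_khintchine:
  assumes "prob_space (\<mu> t)" "sets (\<mu> t) = sets borel" "AE x in \<mu> t. 0 \<le> x"
    and "\<And>s. 0 \<le> s \<Longrightarrow> (\<integral>x. exp (- s * x) \<partial>\<mu> t) = exp (- \<delta> * t * (sqrt (2 * s + \<gamma>\<^sup>2) - \<gamma>))"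
    and "\<And>i. i < q \<Longrightarrow> 0 \<le> u i"
  shows "\<exists>S. ((\<lambda>n. (1 - exp (- (\<Sum>i<q. u i * real (n i)))) * levyX q k lam \<delta> \<gamma> (\<lambda>i. {n i})) has_sum S)
               (posvecs q)
           \<and> ((\<lambda>n. sub_pmf q k lam \<mu> t n * exp (- (\<Sum>i<q. u i * real (n i)))) has_sum exp (- t * S))
               (vecs q)"
  by (intro exI[of _ "\<delta> * (sqrt (2 * mgcp_exponent q k lam u + \<gamma>\<^sup>2) - \<gamma>)"] conjI
      has_sum_levyX_laplace has_sum_sub_pmf_laplace assms)

end

theorem mainTheorem18:
  fixes q :: nat and k :: "nat \<Rightarrow> nat" and lam :: "nat \<Rightarrow> nat \<Rightarrow> real"
    and \<delta> \<gamma> :: real and \<mu> :: "real \<Rightarrow> real measure"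
  assumes "q \<ge> 1"
    and "\<And>i. i < q \<Longrightarrow> k i \<ge> 1"
    and "\<And>i j. i < q \<Longrightarrow> 1 \<le> j \<Longrightarrow> j \<le> k i \<Longrightarrow> lam i j > 0"
    and "\<delta> > 0" and "\<gamma> > 0"
    and "\<And>t. t \<ge> 0 \<Longrightarrow> prob_space (\<mu> t)"
    and "\<And>t. t \<ge> 0 \<Longrightarrow> sets (\<mu> t) = sets borel"
    and "\<And>t. t \<ge> 0 \<Longrightarrow> AE x in \<mu> t. 0 \<le> x"
    and "\<And>t s. t \<ge> 0 \<Longrightarrow> s \<ge> 0 \<Longrightarrow>
           (\<integral>x. exp (- s * x) \<partial>(\<mu> t)) = exp (- \<delta> * t * (sqrt (2 * s + \<gamma>\<^sup>2) - \<gamma>))"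
  shows "is_levy_measure_Nq q (sub_pmf q k lam \<mu>) (levyX q k lam \<delta> \<gamma>)"
proof -
  interpret mgcp_inverse_gaussian q k lam \<delta> \<gamma>
    using assms(2-5) by unfold_locales auto
  show ?thesis
    unfolding is_levy_measure_Nq_def
    by (intro conjI allI ballI impI levyX_rectangle_has_sum levyX_singleton_nonneg levy_khintchine)
       (use assms(6-9) in auto)
qed

end
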